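(* For every $n\ge1$, $$\mathbf{G}^{[n-1]}_{\mathrm{o}/\mathrm{e}}(\lambda;0,0)\cdots\mathbf{G}^{[0]}_{\mathrm{o}/\mathrm{e}}(\lambda;0,0)=\mathbf{G}^{[0]}_{\mathrm{o}/\mathrm{e}}(\lambda;0,0)^n,$$ where $\mathbf{G}^{[0]}_{\mathrm{o}}(\lambda;0,0)=\mathbb{I}+\frac{\mathbf{H}}{\lambda-\mathrm{i}}-\frac{\mathbf{K}}{\lambda+\mathrm{i}}$ and $\mathbf{G}^{[0]}_{\mathrm{e}}(\lambda;0,0)=\mathbb{I}+\frac{\mathbf{K}}{\lambda-\mathrm{i}}-\frac{\mathbf{H}}{\lambda+\mathrm{i}}$ with $\mathbf{H}=\mathrm{i}\begin{bmatrix}1&1\\1&1\end{bmatrix}$, $\mathbf{K}=\mathrm{i}\begin{bmatrix}1&-1\\-1&1\end{bmatrix}$. Explicitly, $$\mathbf{G}^{[0]}_{\mathrm{o}}(\lambda;0,0)^n=\mathbb{I}+\sum_{k=1}^n\binom nk(2\mathrm{i})^{k-1}\Big[\frac{\mathbf{H}}{(\lambda-\mathrm{i})^k}+\frac{(-1)^k\mathbf{K}}{(\lambda+\mathrm{i})^k}\Big],\quad \mathbf{G}^{[0]}_{\mathrm{e}}(\lambda;0,0)^n=\mathbb{I}+\sum_{k=1}^n\binom nk(2\mathrm{i})^{k-1}\Big[\frac{\mathbf{K}}{(\lambda-\mathrm{i})^k}+\frac{(-1)^k\mathbf{H}}{(\lambda+\mathrm{i})^k}\Big].$$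
   Context: $\sigma_2=\begin{bmatrix}0&-\mathrm{i}\\\mathrm{i}&0\end{bmatrix}$. Let $\mathbf{c}_{\infty,\mathrm{o}}=(1,-1)^\top$, $\mathbf{c}_{\infty,\mathrm{e}}=(1,1)^\top$. Recursively (for a fixed choice o or e): $\psi^{[0]}\equiv1$; given the global classical NLS solution $\psi^{[n]}$ (of $\mathrm{i}\psi_t+\frac12\psi_{xx}+(|\psi|^2-1)\psi=0$), $\mathbf{U}^{[n]}(\lambda;x,t)$ is the unique simultaneous fundamental solution of $\mathbf{U}_x=\begin{bmatrix}-\mathrm{i}\lambda&\psi^{[n]}\\-\psi^{[n]*}&\mathrm{i}\lambda\end{bmatrix}\mathbf{U}$, $\mathbf{U}_t=\begin{bmatrix}-\mathrm{i}\lambda^2+\frac{\mathrm{i}}2(|\psi^{[n]}|^2-1)&\lambda\psi^{[n]}+\frac{\mathrm{i}}2\psi^{[n]}_x\\-\lambda\psi^{[n]*}+\frac{\mathrm{i}}2\psi^{[n]*}_x&\mathrm{i}\lambda^2-\frac{\mathrm{i}}2(|\psi^{[n]}|^2-1)\end{bmatrix}\mathbf{U}$ with $\mathbf{U}^{[n]}(\lambda;0,0)=\mathbb{I}$; $\mathbf{s}=\mathbf{U}^{[n]}(\mathrm{i};x,t)\mathbf{c}_\infty$, $\mathbf{s}'=\partial_\lambda\mathbf{U}^{[n]}(\mathrm{i};x,t)\mathbf{c}_\infty$, $N=\mathbf{s}^\dagger\mathbf{s}$, $w=\mathbf{s}^\top\sigma_2\mathbf{s}'$, $\mathbf{Y}^{[n]}_\infty=[-4w^*\mathbf{s}\mathbf{s}^\top\sigma_2+2\mathrm{i}N\sigma_2\mathbf{s}^*\mathbf{s}^\top\sigma_2]/(4|w|^2+N^2)$,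 $\mathbf{Z}^{[n]}_\infty=\sigma_2(\mathbf{Y}^{[n]}_\infty)^*\sigma_2$, $\mathbf{G}^{[n]}(\lambda;x,t)=\mathbb{I}+\mathbf{Y}^{[n]}_\infty/(\lambda-\mathrm{i})+\mathbf{Z}^{[n]}_\infty/(\lambda+\mathrm{i})$, and $\psi^{[n+1]}=\psi^{[n]}+2\mathrm{i}(Y^{[n]}_{\infty,12}-(Y^{[n]}_{\infty,21})^* )$. Subscripts o/e indicate $\mathbf{c}_\infty=\mathbf{c}_{\infty,\mathrm{o}}$ or $\mathbf{c}_{\infty,\mathrm{e}}$. *)

theory Defs
  imports "HOL-Analysis.Analysis"
begin

type_synonym cmat2 = "complex^2^2"
type_synonym cvec2 = "complex^2"

definition mat2 :: "complex \<Rightarrow> complex \<Rightarrow> complex \<Rightarrow> complex \<Rightarrow> cmat2" where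
  "mat2 a b c d = (\<chi> i j. if i = 1 then (if j = 1 then a else b) else (if j = 1 then c else d))"

definition vec2 :: "complex \<Rightarrow> complex \<Rightarrow> cvec2" where
  "vec2 a b = (\<chi> i. if i = 1 then a else b)"

definition smat :: "complex \<Rightarrow> cmat2 \<Rightarrow> cmat2" where
  "smat c A = (\<chi> i j. c * A$i$j)"

definition mconj :: "cmat2 \<Rightarrow> cmat2" where
  "mconj A = (\<chi> i j. cnj (A$i$j))"

definition vconj :: "cvec2 \<Rightarrow> cvec2" where
  "vconj v = (\<chi> i. cnj (v$i))"

definition outer :: "cvec2 \<Rightarrow> cvec2 \<Rightarrow> cmat2" where
  "outer u v = (\<chi> i j. u$i * v$j)"

primrec mpow :: "cmat2 \<Rightarrow> nat \<Rightarrow> cmat2" where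
  "mpow A 0 = mat 1"
| "mpow A (Suc n) = A ** mpow A n"

primrec lprod :: "(nat \<Rightarrow> cmat2) \<Rightarrow> nat \<Rightarrow> cmat2" where
  "lprod G 0 = mat 1"
| "lprod G (Suc n) = G n ** lprod G n"

definition sigma2 :: cmat2 where
  "sigma2 = mat2 0 (-\<i>) \<i> 0"

definition c_odd :: cvec2 where "c_odd = vec2 1 (-1)"
definition c_even :: cvec2 where "c_even = vec2 1 1"

definition Hmat :: cmat2 where "Hmat = smat \<i> (mat2 1 1 1 1)"
definition Kmat :: cmat2 where "Kmat = smat \<i> (mat2 1 (-1) (-1) 1)"

definition Lx :: "complex \<Rightarrow> complex \<Rightarrow> cmat2" where
  "Lx p lam = mat2 (-\<i>*lam) p (- cnj p) (\<i>*lam)"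

definition Lt :: "complex \<Rightarrow> complex \<Rightarrow> complex \<Rightarrow> cmat2" where
  "Lt p px lam = mat2 (-\<i>*lam^2 + \<i>/2*(of_real ((cmod p)^2) - 1)) (lam*p + \<i>/2*px)
                   (-lam*cnj p + \<i>/2*cnj px) (\<i>*lam^2 - \<i>/2*(of_real ((cmod p)^2) - 1))"

definition Yinf :: "(complex \<Rightarrow> cmat2) \<Rightarrow> cvec2 \<Rightarrow> cmat2" where
  "Yinf V c = (let s = V \<i> *v c;
                   s' = (\<chi> j. deriv (\<lambda>\<mu>. (V \<mu> *v c)$j) \<i>);
                   N = (\<Sum>j\<in>UNIV. cnj (s$j) * s$j);
                   w = (\<Sum>j\<in>UNIV. s$j * (sigma2 *v s')$j)
               in smat (1 / (4 * of_real ((cmod w)^2) + N^2))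
                    (smat (-4 * cnj w) (outer s (s v* sigma2))
                     + smat (2 * \<i> * N) (outer (sigma2 *v vconj s) (s v* sigma2))))"

definition Zinf :: "cmat2 \<Rightarrow> cmat2" where
  "Zinf Y = sigma2 ** mconj Y ** sigma2"

definition Gmat :: "cmat2 \<Rightarrow> complex \<Rightarrow> cmat2" where
  "Gmat Y lam = mat 1 + smat (1 / (lam - \<i>)) Y + smat (1 / (lam + \<i>)) (Zinf Y)"

definition darboux_family ::
  "cvec2 \<Rightarrow> (nat \<Rightarrow> real \<Rightarrow> real \<Rightarrow> complex) \<Rightarrow> (nat \<Rightarrow> real \<Rightarrow> real \<Rightarrow> complex)
   \<Rightarrow> (nat \<Rightarrow> real \<Rightarrow> real \<Rightarrow> complex) \<Rightarrow> (nat \<Rightarrow> real \<Rightarrow> real \<Rightarrow> complex)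
   \<Rightarrow> (nat \<Rightarrow> complex \<Rightarrow> real \<Rightarrow> real \<Rightarrow> cmat2) \<Rightarrow> bool" where
  "darboux_family c psi psix psixx psit U \<longleftrightarrow>
     (\<forall>x t. psi 0 x t = 1)
   \<and> (\<forall>n x t. ((\<lambda>y. psi n y t) has_vector_derivative psix n x t) (at x))
   \<and> (\<forall>n x t. ((\<lambda>y. psix n y t) has_vector_derivative psixx n x t) (at x))
   \<and> (\<forall>n x t. ((\<lambda>s. psi n x s) has_vector_derivative psit n x t) (at t))
   \<and> (\<forall>n. continuous_on UNIV (\<lambda>(x,t). psi n x t) \<and> continuous_on UNIV (\<lambda>(x,t). psix n x t)
          \<and> continuous_on UNIV (\<lambda>(x,t). psixx n x t) \<and> continuous_on UNIV (\<lambda>(x,t). psit n x t))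
   \<and> (\<forall>n x t. \<i> * psit n x t + psixx n x t / 2
               + (of_real ((cmod (psi n x t))^2) - 1) * psi n x t = 0)
   \<and> (\<forall>n lam x t. ((\<lambda>y. U n lam y t) has_vector_derivative (Lx (psi n x t) lam ** U n lam x t)) (at x))
   \<and> (\<forall>n lam x t. ((\<lambda>s. U n lam x s) has_vector_derivative
                   (Lt (psi n x t) (psix n x t) lam ** U n lam x t)) (at t))
   \<and> (\<forall>n lam. U n lam 0 0 = mat 1)
   \<and> (\<forall>n x t. psi (Suc n) x t = psi n x t
        + 2 * \<i> * ((Yinf (\<lambda>\<mu>. U n \<mu> x t) c)$1$2 - cnj ((Yinf (\<lambda>\<mu>. U n \<mu> x t) c)$2$1)))"

end

theory Submission
  imports Defs
begin

text \<open>Every fundamental solution is normalised to the identity at \<open>(0,0)\<close>, so the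
  matrices \<open>Y\<^sup>[\<^sup>n\<^sup>]\<^sub>\<infinity>(0,0)\<close> do not depend on \<open>n\<close> and the product of the
  \<open>G\<^sup>[\<^sup>k\<^sup>](\<lambda>;0,0)\<close> is a power of \<open>G\<^sup>[\<^sup>0\<^sup>](\<lambda>;0,0)\<close>. With \<open>U = \<bbbI>\<close> one computes
  \<open>Y\<^sub>\<infinity> = H\<close> (odd) or \<open>K\<close> (even), and \<open>Z\<^sub>\<infinity> = -K\<close> resp. \<open>-H\<close>. Since
  \<open>H\<^sup>2 = 2\<i>H\<close>, \<open>K\<^sup>2 = 2\<i>K\<close> and \<open>HK = KH = 0\<close>, the matrices \<open>\<bbbI> + pH + qK\<close> multiply
  by multiplying \<open>1 + 2\<i>p\<close> and \<open>1 + 2\<i>q\<close>; the \<open>n\<close>-th power therefore has coefficients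
  \<open>((1 + 2\<i>p)\<^sup>n - 1)/(2\<i>)\<close>, whose binomial expansion is the stated sum.\<close>

lemma mat2_eq_iff:
  "(A::cmat2) = B \<longleftrightarrow> A$1$1 = B$1$1 \<and> A$1$2 = B$1$2 \<and> A$2$1 = B$2$1 \<and> A$2$2 = B$2$2"
  by (simp add: vec_eq_iff forall_2)

lemma matrix_add_rdistrib: "((A::'a::semiring_1^'n^'m) + B) ** C = A ** C + B ** C"
  by (simp add: vec_eq_iff matrix_matrix_mult_def distrib_right sum.distrib)

lemma smat_mult_smat: "smat p A ** smat q B = smat (p * q) (A ** B)"
  by (simp add: vec_eq_iff matrix_matrix_mult_def smat_def sum_distrib_left mult_ac)

lemma smat_smat: "smat p (smat q A) = smat (p * q) A"
  by (simp add: vec_eq_iff smat_def mult_ac)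

lemma smat_add_left: "smat p A + smat q A = smat (p + q) A"
  by (simp add: vec_eq_iff smat_def distrib_right)

lemma smat_zero: "smat p 0 = 0"
  by (simp add: vec_eq_iff smat_def)

lemma smat_uminus: "smat (- p) A = - smat p A"
  by (simp add: vec_eq_iff smat_def)

lemma smat_uminus_right: "smat p (- A) = - smat p A"
  by (simp add: vec_eq_iff smat_def)

lemma smat_sum_pair:
  "(\<Sum>k\<in>S. smat (c k) (smat (x k) A + smat (y k) B)) =
     smat (\<Sum>k\<in>S. c k * x k) A + smat (\<Sum>k\<in>S. c k * y k) B"
  by (simp add: vec_eq_iff smat_def sum_distrib_left distrib_left sum.distrib mult_ac)

lemma lprod_const: "lprod (\<lambda>k. G) n = mpow G n"
  by (induction n) auto

lemma Hmat_square: "Hmat ** Hmat = smat (2*\<i>) Hmat"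
  by (simp add: mat2_eq_iff Hmat_def smat_def mat2_def matrix_matrix_mult_def sum_2)

lemma Kmat_square: "Kmat ** Kmat = smat (2*\<i>) Kmat"
  by (simp add: mat2_eq_iff Kmat_def smat_def mat2_def matrix_matrix_mult_def sum_2 algebra_simps)

lemma Hmat_mult_Kmat: "Hmat ** Kmat = 0"
  by (simp add: mat2_eq_iff Hmat_def Kmat_def smat_def mat2_def matrix_matrix_mult_def sum_2)

lemma Kmat_mult_Hmat: "Kmat ** Hmat = 0"
  by (simp add: mat2_eq_iff Hmat_def Kmat_def smat_def mat2_def matrix_matrix_mult_def sum_2)

lemma Zinf_Hmat: "Zinf Hmat = - Kmat"
  by (simp add: Zinf_def mat2_eq_iff smat_def mconj_def sigma2_def mat2_def Hmat_def Kmat_def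
      matrix_matrix_mult_def sum_2)

lemma Zinf_Kmat: "Zinf Kmat = - Hmat"
  by (simp add: Zinf_def mat2_eq_iff smat_def mconj_def sigma2_def mat2_def Hmat_def Kmat_def
      matrix_matrix_mult_def sum_2)

lemma Yinf_identity_odd: "Yinf (\<lambda>\<mu>. mat 1) c_odd = Hmat"
  unfolding Yinf_def Let_def
  by (simp add: mat2_eq_iff smat_def outer_def vconj_def sigma2_def mat2_def Hmat_def c_odd_def
      vec2_def matrix_vector_mult_def vector_matrix_mult_def sum_2 mat_def cmod_def field_simps)

lemma Yinf_identity_even: "Yinf (\<lambda>\<mu>. mat 1) c_even = Kmat"
  unfolding Yinf_def Let_def
  by (simp add: mat2_eq_iff smat_def outer_def vconj_def sigma2_def mat2_def Kmat_def c_even_def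
      vec2_def matrix_vector_mult_def vector_matrix_mult_def sum_2 mat_def cmod_def field_simps)

definition hk :: "complex \<Rightarrow> complex \<Rightarrow> cmat2" where
  "hk p q = mat 1 + smat p Hmat + smat q Kmat"

lemma hk_mult: "hk a b ** hk p q = hk (a + p + 2*\<i>*a*p) (b + q + 2*\<i>*b*q)"
  unfolding hk_def
  by (simp add: matrix_add_ldistrib matrix_add_rdistrib smat_mult_smat smat_smat smat_zero
      Hmat_square Kmat_square Hmat_mult_Kmat Kmat_mult_Hmat flip: smat_add_left)
    (simp add: algebra_simps)

definition hk_pow_coeff :: "complex \<Rightarrow> nat \<Rightarrow> complex" where
  "hk_pow_coeff p n = ((1 + 2*\<i>*p)^n - 1) / (2*\<i>)"

lemma mpow_hk: "mpow (hk p q) n = hk (hk_pow_coeff p n) (hk_pow_coeff q n)"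
proof (induction n)
  case 0
  then show ?case by (simp add: hk_def hk_pow_coeff_def mat2_eq_iff smat_def mat_def)
next
  case (Suc n)
  have "x + hk_pow_coeff x n + 2*\<i>*x*hk_pow_coeff x n = hk_pow_coeff x (Suc n)" for x
    by (simp add: hk_pow_coeff_def field_simps)
  then show ?case using Suc by (simp add: hk_mult)
qed

lemma hk_pow_coeff_binomial:
  "hk_pow_coeff p n = (\<Sum>k=1..n. of_nat (n choose k) * (2*\<i>)^(k-1) * p^k)"
proof -
  have "(1 + 2*\<i>*p)^n = (\<Sum>k=0..n. of_nat (n choose k) * (2*\<i>*p)^k)"
    using binomial_ring[of "2*\<i>*p" 1 n] by (simp add: add.commute atLeast0AtMost)
  also have "\<dots> = 1 + (\<Sum>k=1..n. of_nat (n choose k) * (2*\<i>*p)^k)"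
    by (simp add: sum.atLeast_Suc_atMost)
  also have "(\<Sum>k=1..n. of_nat (n choose k) * (2*\<i>*p)^k)
      = 2*\<i> * (\<Sum>k=1..n. of_nat (n choose k) * (2*\<i>)^(k-1) * p^k)"
    unfolding sum_distrib_left
  proof (rule sum.cong)
    fix k assume "k \<in> {1..n}"
    then obtain m where "k = Suc m" by (cases k) auto
    then show "of_nat (n choose k) * (2*\<i>*p)^k
        = 2*\<i> * (of_nat (n choose k) * (2*\<i>)^(k-1) * p^k)"
      by (simp add: power_mult_distrib)
  qed simp
  finally show ?thesis unfolding hk_pow_coeff_def by simp
qed

lemma mpow_hk_expansion:
  "mpow (hk p q) n = mat 1 + (\<Sum>k=1..n. smat (of_nat (n choose k) * (2*\<i>)^(k-1))
                                  (smat (p^k) Hmat + smat (q^k) Kmat))"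
  "mpow (hk p q) n = mat 1 + (\<Sum>k=1..n. smat (of_nat (n choose k) * (2*\<i>)^(k-1))
                                  (smat (q^k) Kmat + smat (p^k) Hmat))"
  unfolding mpow_hk unfolding hk_pow_coeff_binomial hk_def smat_sum_pair by (simp_all only: add_ac)

lemma Gmat_Hmat: "Gmat Hmat lam = hk (1 / (lam - \<i>)) (- (1 / (lam + \<i>)))"
  unfolding Gmat_def hk_def Zinf_Hmat smat_uminus_right smat_uminus ..

lemma Gmat_Kmat: "Gmat Kmat lam = hk (- (1 / (lam + \<i>))) (1 / (lam - \<i>))"
  unfolding Gmat_def hk_def Zinf_Kmat smat_uminus_right smat_uminus by (simp only: add_ac)

lemma power_minus_inverse: "(- (1 / (z::complex)))^k = (-1)^k / z^k"
  unfolding minus_divide_left power_divide ..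

theorem mainTheorem11:
  fixes c :: cvec2
    and psi psix psixx psit :: "nat \<Rightarrow> real \<Rightarrow> real \<Rightarrow> complex"
    and U :: "nat \<Rightarrow> complex \<Rightarrow> real \<Rightarrow> real \<Rightarrow> cmat2"
    and n :: nat and lam :: complex
  assumes "c = c_odd \<or> c = c_even"
    and "darboux_family c psi psix psixx psit U"
    and "n \<ge> 1"
    and "lam \<noteq> \<i>" and "lam \<noteq> -\<i>"
  shows "lprod (\<lambda>k. Gmat (Yinf (\<lambda>\<mu>. U k \<mu> 0 0) c) lam) n
           = mpow (Gmat (Yinf (\<lambda>\<mu>. U 0 \<mu> 0 0) c) lam) n
       \<and> (c = c_odd \<longrightarrow>
            Gmat (Yinf (\<lambda>\<mu>. U 0 \<mu> 0 0) c) lam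
              = mat 1 + smat (1 / (lam - \<i>)) Hmat - smat (1 / (lam + \<i>)) Kmat
          \<and> mpow (Gmat (Yinf (\<lambda>\<mu>. U 0 \<mu> 0 0) c) lam) n
              = mat 1 + (\<Sum>k=1..n. smat (of_nat (n choose k) * (2*\<i>)^(k-1))
                    (smat (1 / (lam - \<i>)^k) Hmat + smat ((-1)^k / (lam + \<i>)^k) Kmat)))
       \<and> (c = c_even \<longrightarrow>
            Gmat (Yinf (\<lambda>\<mu>. U 0 \<mu> 0 0) c) lam
              = mat 1 + smat (1 / (lam - \<i>)) Kmat - smat (1 / (lam + \<i>)) Hmat
          \<and> mpow (Gmat (Yinf (\<lambda>\<mu>. U 0 \<mu> 0 0) c) lam) n
              = mat 1 + (\<Sum>k=1..n. smat (of_nat (n choose k) * (2*\<i>)^(k-1))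
                    (smat (1 / (lam - \<i>)^k) Kmat + smat ((-1)^k / (lam + \<i>)^k) Hmat)))"
proof -
  have U_origin: "(\<lambda>\<mu>. U k \<mu> 0 0) = (\<lambda>\<mu>. mat 1)" for k
    using assms(2) unfolding darboux_family_def by simp
  note odd = Yinf_identity_odd Gmat_Hmat and even = Yinf_identity_even Gmat_Kmat
  note powers = power_minus_inverse power_one_over
  show ?thesis
    unfolding U_origin lprod_const
  proof (intro conjI impI refl)
    assume c: "c = c_odd"
    show "Gmat (Yinf (\<lambda>\<mu>. mat 1) c) lam
        = mat 1 + smat (1 / (lam - \<i>)) Hmat - smat (1 / (lam + \<i>)) Kmat"
      unfolding c odd hk_def smat_uminus by simp
    show "mpow (Gmat (Yinf (\<lambda>\<mu>. mat 1) c) lam) n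
        = mat 1 + (\<Sum>k=1..n. smat (of_nat (n choose k) * (2*\<i>)^(k-1))
            (smat (1 / (lam - \<i>)^k) Hmat + smat ((-1)^k / (lam + \<i>)^k) Kmat))"
      unfolding c odd mpow_hk_expansion(1) powers by simp
  next
    assume c: "c = c_even"
    show "Gmat (Yinf (\<lambda>\<mu>. mat 1) c) lam
        = mat 1 + smat (1 / (lam - \<i>)) Kmat - smat (1 / (lam + \<i>)) Hmat"
      unfolding c even hk_def smat_uminus by (simp add: algebra_simps)
    show "mpow (Gmat (Yinf (\<lambda>\<mu>. mat 1) c) lam) n
        = mat 1 + (\<Sum>k=1..n. smat (of_nat (n choose k) * (2*\<i>)^(k-1))
            (smat (1 / (lam - \<i>)^k) Kmat + smat ((-1)^k / (lam + \<i>)^k) Hmat))"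
      unfolding c even mpow_hk_expansion(2) powers by simp
  qed
qed

end
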